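(* For every integer $m\ge 1$, every $0\le s\le m$ and every fixed $\lambda_1,\dots,\lambda_m$, the function $G_s(m,\{\lambda_j\}|\{\xi_k\})$ is symmetric under all permutations of the variables $\xi_1,\xi_2,\dots,\xi_m$.
   Context: Fix a real parameter $\zeta\in(0,\pi)$. For integers $m\ge1$ and $0\le s\le m$ set $\epsilon_j=-\tfrac12$ for $1\le j\le s$ and $\epsilon_j=+\tfrac12$ for $s<j\le m$; $\epsilon_j$ is attached to the variable $\lambda_j$. For complex variables $\lambda_1,\dots,\lambda_m,\xi_1,\dots,\xi_m$ define $$G_s(m,\{\lambda_j\}|\{\xi_k\})=\frac{1}{s!(m-s)!}\sum_{\sigma\in S_m}(-1)^{[\sigma]}\prod_{1\le k<j\le m}\frac{\sinh(\lambda_{\sigma(j)}-\xi_k+i\epsilon_{\sigma(j)}\zeta)\,\sinh(\lambda_{\sigma(k)}-\xi_j-i\epsilon_{\sigma(k)}\zeta)}{\sinh(\lambda_{\sigma(j)}-\lambda_{\sigma(k)}+i(\epsilon_{\sigma(j)}+\epsilon_{\sigma(k)})\zeta)},$$ where the sum is over all permutations $\sigma$ of $\{1,\dots,m\}$ and $(-1)^{[\sigma]}$ is the sign of $\sigma$ (an identity of meromorphic functions). *)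

theory Defs
  imports "HOL-Analysis.Analysis" "HOL-Combinatorics.Permutations"
begin

definition eps :: "nat \<Rightarrow> nat \<Rightarrow> real" where
  "eps s j = (if j \<le> s then - 1 / 2 else 1 / 2)"

definition G :: "real \<Rightarrow> nat \<Rightarrow> nat \<Rightarrow> (nat \<Rightarrow> complex) \<Rightarrow> (nat \<Rightarrow> complex) \<Rightarrow> complex" where
  "G \<zeta> s m lam xi =
     (1 / (of_nat (fact s) * of_nat (fact (m - s)))) *
     (\<Sum>\<sigma> | \<sigma> permutes {1..m}.
        of_int (sign \<sigma>) *
        (\<Prod>j\<in>{1..m}. \<Prod>k\<in>{1..<j}.
           sinh (lam (\<sigma> j) - xi k + \<i> * of_real (eps s (\<sigma> j) * \<zeta>)) *
           sinh (lam (\<sigma> k) - xi j - \<i> * of_real (eps s (\<sigma> k) * \<zeta>)) /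
           sinh (lam (\<sigma> j) - lam (\<sigma> k) + \<i> * of_real ((eps s (\<sigma> j) + eps s (\<sigma> k)) * \<zeta>))))"

end

theory Submission
  imports Defs
begin

text \<open>
  Write the summand of \<open>G\<close> for \<open>\<sigma>\<close> as a common factor times the factor of the pair
  \<open>(p+1, p)\<close>. Pairing \<open>\<sigma>\<close> with \<open>\<sigma> \<circ> (p, p+1)\<close>, which has the opposite sign, the common
  factor is the same for both and is unchanged when \<open>\<xi>\<^sub>p\<close> and \<open>\<xi>\<^sub>p\<^sub>+\<^sub>1\<close> are exchanged, while the
  difference of the two special factors is symmetric in \<open>\<xi>\<^sub>p, \<xi>\<^sub>p\<^sub>+\<^sub>1\<close> by an elementary
  identity between hyperbolic sines. So \<open>G\<close> is invariant under adjacent transpositions of the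
  \<open>\<xi>\<close>'s, and these generate all permutations.
\<close>

lemma sinh_exchange:
  fixes A B x y c d :: complex
  assumes "sinh (B - A + (c + d)) \<noteq> 0" and "sinh (A - B + (c + d)) \<noteq> 0"
  shows "sinh (B - x + d) * sinh (A - y - c) / sinh (B - A + (c + d))
       - sinh (A - x + c) * sinh (B - y - d) / sinh (A - B + (c + d))
       = sinh (B - y + d) * sinh (A - x - c) / sinh (B - A + (c + d))
       - sinh (A - y + c) * sinh (B - x - d) / sinh (A - B + (c + d))"
proof -
  have sinh_exp: "sinh z = (exp z - inverse (exp z)) / 2" for z :: complex
    by (simp add: sinh_def exp_minus scaleR_conv_of_real field_simps)
  show ?thesis
    using assms unfolding sinh_exp exp_add exp_diff by (simp add: field_simps)
qed

lemma invariant_under_permutes_if_adjacent: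
  assumes adj: "\<And>p \<xi>. l \<le> p \<Longrightarrow> Suc p \<le> u \<Longrightarrow> S (\<xi> \<circ> Transposition.transpose p (Suc p)) = S \<xi>"
    and "\<tau> permutes {l..u}"
  shows "S (\<xi> \<circ> \<tau>) = S \<xi>"
proof -
  have compose: "S (\<xi> \<circ> (\<tau>\<^sub>1 \<circ> \<tau>\<^sub>2)) = S \<xi>"
    if "\<And>\<xi>. S (\<xi> \<circ> \<tau>\<^sub>1) = S \<xi>" and "\<And>\<xi>. S (\<xi> \<circ> \<tau>\<^sub>2) = S \<xi>" for \<xi> \<tau>\<^sub>1 \<tau>\<^sub>2
    using that by (metis o_assoc)
  have adj_seq: "S (\<xi> \<circ> apply_adj_transps xs) = S \<xi>" if "set xs \<subseteq> {l..<u}" for xs \<xi>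
    using that
  proof (induction xs arbitrary: \<xi>)
    case (Cons x xs)
    have "S (\<xi> \<circ> (Transposition.transpose x (Suc x) \<circ> apply_adj_transps xs)) = S \<xi>"
      using Cons adj[of x] by (intro compose) (auto simp: comp_def)
    then show ?case by (simp add: comp_def)
  qed simp
  have transp: "S (\<xi> \<circ> Transposition.transpose a b) = S \<xi>"
    if "a \<in> {l..u}" "b \<in> {l..u}" "a < b" for a b \<xi>
    using adj_seq[of "adj_transp_seq a b"] that by (simp add: adj_transp_seq_correct set_adj_transp_seq)
  have "\<forall>\<xi>. S (\<xi> \<circ> \<tau>) = S \<xi>"
    using assms(2) finite_atLeastAtMost
  proof (induction rule: permutes_induct)
    case (swap a b p)
    then have "S (\<xi> \<circ> Transposition.transpose a b) = S \<xi>" for \<xi>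
      using transp[of a b] transp[of b a] by (cases "a < b") (auto simp: transpose_commute)
    with swap.IH show ?case by (blast intro: compose)
  qed simp
  then show ?thesis ..
qed

definition pair_prod ::
    "nat \<Rightarrow> (nat \<Rightarrow> 'b \<Rightarrow> 'a::field) \<Rightarrow> (nat \<Rightarrow> 'b \<Rightarrow> 'a) \<Rightarrow> (nat \<Rightarrow> nat \<Rightarrow> 'a) \<Rightarrow>
      (nat \<Rightarrow> nat) \<Rightarrow> (nat \<Rightarrow> 'b) \<Rightarrow> 'a"
  where "pair_prod m f g h \<sigma> \<xi> =
    (\<Prod>j\<in>{1..m}. \<Prod>k\<in>{1..<j}. f (\<sigma> j) (\<xi> k) * g (\<sigma> k) (\<xi> j) / h (\<sigma> j) (\<sigma> k))"

definition alternant ::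
    "nat \<Rightarrow> (nat \<Rightarrow> 'b \<Rightarrow> 'a::field) \<Rightarrow> (nat \<Rightarrow> 'b \<Rightarrow> 'a) \<Rightarrow> (nat \<Rightarrow> nat \<Rightarrow> 'a) \<Rightarrow>
      (nat \<Rightarrow> 'b) \<Rightarrow> 'a"
  where "alternant m f g h \<xi> = (\<Sum>\<sigma> | \<sigma> permutes {1..m}. of_int (sign \<sigma>) * pair_prod m f g h \<sigma> \<xi>)"

definition lower_pairs_but :: "nat \<Rightarrow> nat \<Rightarrow> (nat \<times> nat) set"
  where "lower_pairs_but m p = Sigma {1..m} (\<lambda>j. {1..<j}) - {(Suc p, p)}"

definition off_pair_prod ::
    "nat \<Rightarrow> nat \<Rightarrow> (nat \<Rightarrow> 'b \<Rightarrow> 'a::field) \<Rightarrow> (nat \<Rightarrow> 'b \<Rightarrow> 'a) \<Rightarrow> (nat \<Rightarrow> nat \<Rightarrow> 'a) \<Rightarrow>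
      (nat \<Rightarrow> nat) \<Rightarrow> (nat \<Rightarrow> 'b) \<Rightarrow> 'a"
  where "off_pair_prod m p f g h \<sigma> \<xi> =
    (\<Prod>(j, k)\<in>lower_pairs_but m p. f (\<sigma> j) (\<xi> k)) * (\<Prod>(j, k)\<in>lower_pairs_but m p. g (\<sigma> k) (\<xi> j)) /
    (\<Prod>(j, k)\<in>lower_pairs_but m p. h (\<sigma> j) (\<sigma> k))"

lemma pair_prod_split:
  assumes "1 \<le> p" and "Suc p \<le> m"
  shows "pair_prod m f g h \<sigma> \<xi> = off_pair_prod m p f g h \<sigma> \<xi> *
    (f (\<sigma> (Suc p)) (\<xi> p) * g (\<sigma> p) (\<xi> (Suc p)) / h (\<sigma> (Suc p)) (\<sigma> p))"
proof -
  let ?P = "Sigma {1..m} (\<lambda>j. {1..<j})"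
  have "pair_prod m f g h \<sigma> \<xi> = (\<Prod>(j, k)\<in>?P. f (\<sigma> j) (\<xi> k) * g (\<sigma> k) (\<xi> j) / h (\<sigma> j) (\<sigma> k))"
    unfolding pair_prod_def by (subst prod.Sigma) auto
  also have "\<dots> = (\<Prod>(j, k)\<in>lower_pairs_but m p. f (\<sigma> j) (\<xi> k) * g (\<sigma> k) (\<xi> j) / h (\<sigma> j) (\<sigma> k)) *
      (f (\<sigma> (Suc p)) (\<xi> p) * g (\<sigma> p) (\<xi> (Suc p)) / h (\<sigma> (Suc p)) (\<sigma> p))"
    using assms unfolding lower_pairs_but_def
    by (subst prod.remove[of _ "(Suc p, p)"]) (auto simp: mult.commute)
  finally show ?thesis
    by (simp add: off_pair_prod_def case_prod_unfold prod_dividef prod.distrib)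
qed

lemma prod_lower_pairs_but_swap_fst:
  assumes "1 \<le> p" and "Suc p \<le> m"
  shows "(\<Prod>(j, k)\<in>lower_pairs_but m p. F (Transposition.transpose p (Suc p) j) k) =
    (\<Prod>(j, k)\<in>lower_pairs_but m p. F j k)"
  by (rule prod.reindex_bij_witness[where i = "\<lambda>(j, k). (Transposition.transpose p (Suc p) j, k)"
        and j = "\<lambda>(j, k). (Transposition.transpose p (Suc p) j, k)"])
     (use assms in \<open>auto simp: lower_pairs_but_def Transposition.transpose_def split: if_splits\<close>)

lemma prod_lower_pairs_but_swap_snd:
  assumes "1 \<le> p" and "Suc p \<le> m"
  shows "(\<Prod>(j, k)\<in>lower_pairs_but m p. F j (Transposition.transpose p (Suc p) k)) =
    (\<Prod>(j, k)\<in>lower_pairs_but m p. F j k)"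
  by (rule prod.reindex_bij_witness[where i = "\<lambda>(j, k). (j, Transposition.transpose p (Suc p) k)"
        and j = "\<lambda>(j, k). (j, Transposition.transpose p (Suc p) k)"])
     (use assms in \<open>auto simp: lower_pairs_but_def Transposition.transpose_def split: if_splits\<close>)

lemma off_pair_prod_swap_perm:
  assumes "1 \<le> p" and "Suc p \<le> m"
  shows "off_pair_prod m p f g h (\<sigma> \<circ> Transposition.transpose p (Suc p)) \<xi> = off_pair_prod m p f g h \<sigma> \<xi>"
  using prod_lower_pairs_but_swap_fst[OF assms, of "\<lambda>j k. f (\<sigma> j) (\<xi> k)"]
    prod_lower_pairs_but_swap_snd[OF assms, of "\<lambda>j k. g (\<sigma> k) (\<xi> j)"]
    prod_lower_pairs_but_swap_fst[OF assms, of "\<lambda>j k. h (\<sigma> j) (\<sigma> (Transposition.transpose p (Suc p) k))"]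
    prod_lower_pairs_but_swap_snd[OF assms, of "\<lambda>j k. h (\<sigma> j) (\<sigma> k)"]
  by (simp add: off_pair_prod_def)

lemma off_pair_prod_swap_var:
  assumes "1 \<le> p" and "Suc p \<le> m"
  shows "off_pair_prod m p f g h \<sigma> (\<xi> \<circ> Transposition.transpose p (Suc p)) = off_pair_prod m p f g h \<sigma> \<xi>"
  using prod_lower_pairs_but_swap_snd[OF assms, of "\<lambda>j k. f (\<sigma> j) (\<xi> k)"]
    prod_lower_pairs_but_swap_fst[OF assms, of "\<lambda>j k. g (\<sigma> k) (\<xi> j)"]
  by (simp add: off_pair_prod_def)

lemma alternant_swap_adjacent:
  fixes f g :: "nat \<Rightarrow> 'b \<Rightarrow> 'a::field_char_0"
  assumes p: "1 \<le> p" "Suc p \<le> m"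
    and exchange: "\<And>a b x y. a \<in> {1..m} \<Longrightarrow> b \<in> {1..m} \<Longrightarrow> a \<noteq> b \<Longrightarrow>
      f b x * g a y / h b a - f a x * g b y / h a b = f b y * g a x / h b a - f a y * g b x / h a b"
  shows "alternant m f g h (\<xi> \<circ> Transposition.transpose p (Suc p)) = alternant m f g h \<xi>"
proof -
  let ?t = "Transposition.transpose p (Suc p)"
  let ?K = "off_pair_prod m p f g h"
  let ?Perms = "{\<sigma>. \<sigma> permutes {1..m}}"
  define \<phi> where "\<phi> \<sigma> \<xi> = f (\<sigma> (Suc p)) (\<xi> p) * g (\<sigma> p) (\<xi> (Suc p)) / h (\<sigma> (Suc p)) (\<sigma> p)"
    for \<sigma> :: "nat \<Rightarrow> nat" and \<xi> :: "nat \<Rightarrow> 'b"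
  have split: "pair_prod m f g h \<sigma> \<xi> = ?K \<sigma> \<xi> * \<phi> \<sigma> \<xi>" for \<sigma> \<xi>
    unfolding \<phi>_def using p by (rule pair_prod_split)
  have sign_swap: "of_int (sign (\<sigma> \<circ> ?t)) = - (of_int (sign \<sigma>) :: 'a)" if "\<sigma> permutes {1..m}" for \<sigma>
  proof -
    have "permutation \<sigma>"
      using that permutation_permutes by blast
    then show ?thesis
      by (simp add: sign_compose sign_swap_id permutation_swap_id)
  qed
  have twice: "2 * alternant m f g h \<xi> =
      (\<Sum>\<sigma>\<in>?Perms. of_int (sign \<sigma>) * ?K \<sigma> \<xi> * (\<phi> \<sigma> \<xi> - \<phi> (\<sigma> \<circ> ?t) \<xi>))" for \<xi>
  proof -
    have "alternant m f g h \<xi> = (\<Sum>\<sigma>\<in>?Perms. of_int (sign (\<sigma> \<circ> ?t)) * pair_prod m f g h (\<sigma> \<circ> ?t) \<xi>)"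
      unfolding alternant_def using p by (intro sum_permutations_compose_right permutes_swap_id) auto
    also have "\<dots> = (\<Sum>\<sigma>\<in>?Perms. - of_int (sign \<sigma>) * ?K \<sigma> \<xi> * \<phi> (\<sigma> \<circ> ?t) \<xi>)"
      using p by (intro sum.cong) (auto simp: sign_swap split off_pair_prod_swap_perm)
    finally have paired: "alternant m f g h \<xi> = \<dots>" .
    have unpaired: "alternant m f g h \<xi> = (\<Sum>\<sigma>\<in>?Perms. of_int (sign \<sigma>) * ?K \<sigma> \<xi> * \<phi> \<sigma> \<xi>)"
      unfolding alternant_def by (simp add: split mult.assoc)
    have "2 * alternant m f g h \<xi> = alternant m f g h \<xi> + alternant m f g h \<xi>"
      by (rule mult_2)
    also have "\<dots> = (\<Sum>\<sigma>\<in>?Perms. of_int (sign \<sigma>) * ?K \<sigma> \<xi> * \<phi> \<sigma> \<xi>) +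
        (\<Sum>\<sigma>\<in>?Perms. - of_int (sign \<sigma>) * ?K \<sigma> \<xi> * \<phi> (\<sigma> \<circ> ?t) \<xi>)"
      using paired unpaired by simp
    also have "\<dots> = (\<Sum>\<sigma>\<in>?Perms. of_int (sign \<sigma>) * ?K \<sigma> \<xi> * (\<phi> \<sigma> \<xi> - \<phi> (\<sigma> \<circ> ?t) \<xi>))"
      by (simp add: sum.distrib[symmetric] algebra_simps)
    finally show ?thesis .
  qed
  have exchange_\<phi>: "\<phi> \<sigma> (\<xi> \<circ> ?t) - \<phi> (\<sigma> \<circ> ?t) (\<xi> \<circ> ?t) = \<phi> \<sigma> \<xi> - \<phi> (\<sigma> \<circ> ?t) \<xi>"
    if "\<sigma> permutes {1..m}" for \<sigma>
  proof -
    have "\<sigma> p \<in> {1..m}" "\<sigma> (Suc p) \<in> {1..m}"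
      using p permutes_in_image[OF that, of p] permutes_in_image[OF that, of "Suc p"] by simp_all
    moreover have "\<sigma> p \<noteq> \<sigma> (Suc p)"
      using permutes_inj[OF that] by (simp add: inj_eq)
    ultimately show ?thesis
      unfolding \<phi>_def using exchange[of "\<sigma> p" "\<sigma> (Suc p)" "\<xi> (Suc p)" "\<xi> p"] by simp
  qed
  have "2 * alternant m f g h (\<xi> \<circ> ?t) = 2 * alternant m f g h \<xi>"
    unfolding twice using p by (intro sum.cong) (auto simp: off_pair_prod_swap_var exchange_\<phi>)
  then show ?thesis by simp
qed

theorem lemma3p1:
  fixes \<zeta> :: real and m s :: nat and lam xi :: "nat \<Rightarrow> complex" and \<tau> :: "nat \<Rightarrow> nat"
  assumes "0 < \<zeta>" and "\<zeta> < pi"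
    and "1 \<le> m" and "s \<le> m"
    and "\<And>a b. a \<in> {1..m} \<Longrightarrow> b \<in> {1..m} \<Longrightarrow> a \<noteq> b \<Longrightarrow>
           sinh (lam a - lam b + \<i> * of_real ((eps s a + eps s b) * \<zeta>)) \<noteq> 0"
    and "\<tau> permutes {1..m}"
  shows "G \<zeta> s m lam (xi \<circ> \<tau>) = G \<zeta> s m lam xi"
proof -
  define c where "c a = \<i> * of_real (eps s a * \<zeta>)" for a
  define f where "f a x = sinh (lam a - x + c a)" for a x
  define g where "g a y = sinh (lam a - y - c a)" for a y
  define h where "h a b = sinh (lam a - lam b + (c a + c b))" for a b
  have G_alternant: "G \<zeta> s m lam \<xi> = alternant m f g h \<xi> / (of_nat (fact s) * of_nat (fact (m - s)))"
    for \<xi>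
    unfolding G_def alternant_def pair_prod_def f_def g_def h_def c_def
    by (simp add: algebra_simps)
  have exchange: "f b x * g a y / h b a - f a x * g b y / h a b =
      f b y * g a x / h b a - f a y * g b x / h a b"
    if "a \<in> {1..m}" "b \<in> {1..m}" "a \<noteq> b" for a b x y
  proof -
    have c_add: "c a' + c b' = \<i> * of_real ((eps s a' + eps s b') * \<zeta>)" for a' b'
      by (simp add: c_def distrib_left distrib_right)
    have "h a b \<noteq> 0" "h b a \<noteq> 0"
      using assms(5)[of a b] assms(5)[of b a] that by (simp_all add: h_def c_add)
    moreover have "h b a = sinh (lam b - lam a + (c a + c b))"
      by (simp add: h_def add.commute)
    ultimately show ?thesis
      using sinh_exchange[where A = "lam a" and B = "lam b" and c = "c a" and d = "c b"]
      unfolding f_def g_def h_def by simp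
  qed
  have "alternant m f g h (xi \<circ> \<tau>) = alternant m f g h xi"
    using assms(6)
    by (rule invariant_under_permutes_if_adjacent[rotated]) (intro alternant_swap_adjacent exchange)
  then show ?thesis
    unfolding G_alternant by simp
qed

end
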